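(* Let $\mathbf T$ be a countably infinite homogeneous tournament and $\mathbf T^*$ an expansion of $\mathbf T$ as in the context. If $\mathrm{Age}(\mathbf T^* )$ has the expansion property relative to $\mathrm{Age}(\mathbf T)$, then $\mathrm{Age}(\mathbf T[I_\omega]^* )$ has the expansion property relative to $\mathrm{Age}(\mathbf T[I_\omega])$, where $\mathbf T[I_\omega]$ is the reduct of $\mathbf T[I_\omega]^*$ to $\{E\}$.
   Context: The age $\mathrm{Age}(\mathbf F)$ of a structure $\mathbf F$ is the class of finite structures embeddable in $\mathbf F$. Expansion property: let $L\subseteq L^*$ be relational languages, $\mathcal K$ a class of finite $L$-structures and $\mathcal K^*$ a class of finite $L^*$-structures whose $L$-reducts lie in $\mathcal K$. $\mathcal K^*$ has the expansion property relative to $\mathcal K$ if for every $\mathbf A\in\mathcal K$ there is $\mathbf B\in\mathcal K$ such that for all $\mathbf A^*,\mathbf B^*\in\mathcal K^*$ whose $L$-reducts are $\mathbf A$ and $\mathbf B$ respectively, $\mathbf A^*$ embeds into $\mathbf B^*$. A tournament is a directed graph in which every pair of distinct vertices carries exactly one directed edge; it is homogeneous if every isomorphism between finite substructures extends to an automorphism. $\mathbf T=(T,E^{\mathbf T})$ is a countable homogeneous tournament, and $\mathbf T^*$ is an expansion of $\mathbf T$ to a countable relational language $L_{\mathbf T^*}\supseteq\{E,<\}$ in which $<$ is interpreted as a linear order $<^*$ on $T$. Fix a linear order $\prec$ on $\mathbb N$ with $(\mathbb N,\prec)\cong(\mathbb Q,<)$. The structure $\mathbf T[I_\omega]^*$ has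 universe $T\times\mathbb N$ and language $L_{\mathbf T^*}$, interpreted as: $E((x,i),(y,j))$ iff $E^{\mathbf T}(x,y)$; for each $m$-ary $R\in L_{\mathbf T^*}\setminus\{E,<\}$, $R((x_1,i_1),\dots,(x_m,i_m))$ iff $R^{\mathbf T^*}(x_1,\dots,x_m)$; $(x,i)<(y,j)$ iff $x<^*y$, or $x=y$ and $i\prec j$. *)

theory Defs
  imports Main "HOL-Library.Countable_Set"
begin

text \<open>An L-structure for a set of
  symbols L is one whose relations outside L are empty.\<close>

record ('a, 'r) struc =
  univ :: "'a set"
  rel  :: "'r \<Rightarrow> 'a list set"

definition wf_struc :: "('r \<Rightarrow> nat) \<Rightarrow> ('a, 'r) struc \<Rightarrow> bool" where
  "wf_struc ar S \<longleftrightarrow> (\<forall>R. \<forall>xs \<in> rel S R. length xs = ar R \<and> set xs \<subseteq> univ S)"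

definition reduct :: "'r set \<Rightarrow> ('a, 'r) struc \<Rightarrow> ('a, 'r) struc" where
  "reduct L S = \<lparr>univ = univ S, rel = (\<lambda>R. if R \<in> L then rel S R else {})\<rparr>"

definition embedding :: "('a \<Rightarrow> 'b) \<Rightarrow> ('a, 'r) struc \<Rightarrow> ('b, 'r) struc \<Rightarrow> bool" where
  "embedding f A B \<longleftrightarrow> inj_on f (univ A) \<and> f ` univ A \<subseteq> univ B \<and>
     (\<forall>R xs. set xs \<subseteq> univ A \<longrightarrow> (xs \<in> rel A R \<longleftrightarrow> map f xs \<in> rel B R))"

definition embeds :: "('a, 'r) struc \<Rightarrow> ('b, 'r) struc \<Rightarrow> bool" where
  "embeds A B \<longleftrightarrow> (\<exists>f. embedding f A B)"

text \<open>Since every finite structure is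
  isomorphic to one whose universe is a subset of nat, and all notions below are
  isomorphism invariant, we represent the age by its members with universe in nat.\<close>
definition age :: "('r \<Rightarrow> nat) \<Rightarrow> ('a, 'r) struc \<Rightarrow> (nat, 'r) struc set" where
  "age ar F = {A. wf_struc ar A \<and> finite (univ A) \<and> embeds A F}"

definition expansion_property ::
  "'r set \<Rightarrow> (nat, 'r) struc set \<Rightarrow> (nat, 'r) struc set \<Rightarrow> bool" where
  "expansion_property L K Kstar \<longleftrightarrow>
     (\<forall>A \<in> K. \<exists>B \<in> K. \<forall>As Bs. As \<in> Kstar \<longrightarrow> Bs \<in> Kstar \<longrightarrow>
        reduct L As = A \<longrightarrow> reduct L Bs = B \<longrightarrow> embeds As Bs)"

definition tournament :: "'r \<Rightarrow> ('a, 'r) struc \<Rightarrow> bool" where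
  "tournament E S \<longleftrightarrow>
     (\<forall>x \<in> univ S. [x, x] \<notin> rel S E) \<and>
     (\<forall>x \<in> univ S. \<forall>y \<in> univ S. x \<noteq> y \<longrightarrow> ([x, y] \<in> rel S E \<longleftrightarrow> [y, x] \<notin> rel S E))"

definition partial_iso :: "('a \<Rightarrow> 'a) \<Rightarrow> 'a set \<Rightarrow> ('a, 'r) struc \<Rightarrow> bool" where
  "partial_iso f A S \<longleftrightarrow> inj_on f A \<and> A \<subseteq> univ S \<and> f ` A \<subseteq> univ S \<and>
     (\<forall>R xs. set xs \<subseteq> A \<longrightarrow> (xs \<in> rel S R \<longleftrightarrow> map f xs \<in> rel S R))"

definition automorphism :: "('a \<Rightarrow> 'a) \<Rightarrow> ('a, 'r) struc \<Rightarrow> bool" where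
  "automorphism g S \<longleftrightarrow> bij_betw g (univ S) (univ S) \<and>
     (\<forall>R xs. set xs \<subseteq> univ S \<longrightarrow> (xs \<in> rel S R \<longleftrightarrow> map g xs \<in> rel S R))"

definition homogeneous :: "('a, 'r) struc \<Rightarrow> bool" where
  "homogeneous S \<longleftrightarrow> (\<forall>A f. finite A \<longrightarrow> partial_iso f A S \<longrightarrow>
     (\<exists>g. automorphism g S \<and> (\<forall>x \<in> A. g x = f x)))"

definition strict_linear_order_on :: "'a set \<Rightarrow> ('a \<Rightarrow> 'a \<Rightarrow> bool) \<Rightarrow> bool" where
  "strict_linear_order_on X lt \<longleftrightarrow>
     (\<forall>x \<in> X. \<not> lt x x) \<and>
     (\<forall>x \<in> X. \<forall>y \<in> X. \<forall>z \<in> X. lt x y \<longrightarrow> lt y z \<longrightarrow> lt x z) \<and>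
     (\<forall>x \<in> X. \<forall>y \<in> X. x \<noteq> y \<longrightarrow> lt x y \<or> lt y x)"

text \<open>The structure T[I_omega]* with universe T x nat: every symbol other than Lt is
  interpreted via the first coordinates; Lt is the lexicographic order.\<close>
definition blowup :: "'r \<Rightarrow> (nat \<Rightarrow> nat \<Rightarrow> bool) \<Rightarrow> ('a, 'r) struc \<Rightarrow> ('a \<times> nat, 'r) struc" where
  "blowup Lt prec S =
    \<lparr>univ = univ S \<times> UNIV,
     rel = (\<lambda>R. if R = Lt then
                  {[(x, i), (y, j)] | x i y j. x \<in> univ S \<and> y \<in> univ S \<and>
                      ([x, y] \<in> rel S Lt \<or> (x = y \<and> prec i j))}
                else {xs. set xs \<subseteq> univ S \<times> UNIV \<and> map fst xs \<in> rel S R})\<rparr>"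

end

theory Submission
  imports Defs "HOL-Library.Nat_Bijection"
begin

text \<open>Since \<open>T\<close> is a tournament, two points of \<open>T[I_\<omega>]\<close> lie in the same copy \<open>{x} \<times> \<nat>\<close> exactly when
  \<open>E\<close> relates them in neither direction. Hence a finite \<open>E\<close>-structure \<open>A\<close> in the age of \<open>T[I_\<omega>]\<close> determines
  its partition into copies, and the \<open>E\<close>-structure \<open>A0\<close> that it induces on one representative per copy
  lies in the age of \<open>T\<close>. Let \<open>B0\<close> witness the expansion property for \<open>A0\<close> and let \<open>B = B0[I_n]\<close> with
  \<open>n > |A|\<close>. Given expansions \<open>A*\<close>, \<open>B*\<close> of \<open>A\<close>, \<open>B\<close> in the age of \<open>T[I_\<omega>]*\<close>, projecting their embeddings
  into \<open>T[I_\<omega>]*\<close> to the first coordinate yields expansions of \<open>A0\<close> and \<open>B0\<close> in the age of \<open>T*\<close>. An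
  embedding between these decides into which copy of \<open>B\<close> each copy of \<open>A\<close> goes; inside a copy,
  which has at least \<open>|A|\<close> points, one embeds by matching the orders \<open>\<prec>\<close> of second coordinates.\<close>

lemma univ_reduct [simp]: "univ (reduct L S) = univ S"
  by (simp add: reduct_def)

lemma rel_reduct [simp]: "rel (reduct L S) R = (if R \<in> L then rel S R else {})"
  by (simp add: reduct_def)

lemma wf_struc_reduct: "wf_struc ar S \<Longrightarrow> wf_struc ar (reduct L S)"
  by (simp add: wf_struc_def)

lemma embedding_reduct: "embedding k S X \<Longrightarrow> embedding k (reduct L S) (reduct L X)"
  by (simp add: embedding_def)

definition pullback :: "'b set \<Rightarrow> ('b \<Rightarrow> 'a) \<Rightarrow> ('a, 'r) struc \<Rightarrow> ('b, 'r) struc" where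
  "pullback X h S = \<lparr>univ = X, rel = (\<lambda>R. {xs. set xs \<subseteq> X \<and> map h xs \<in> rel S R})\<rparr>"

lemma univ_pullback [simp]: "univ (pullback X h S) = X"
  and rel_pullback [simp]: "rel (pullback X h S) R = {xs. set xs \<subseteq> X \<and> map h xs \<in> rel S R}"
  by (simp_all add: pullback_def)

lemma reduct_pullback: "reduct L (pullback X h S) = pullback X h (reduct L S)"
  by (auto simp: reduct_def pullback_def fun_eq_iff)

lemma pullback_cong:
  assumes "\<And>xs R. set xs \<subseteq> X \<Longrightarrow> map h xs \<in> rel S R \<longleftrightarrow> map h' xs \<in> rel S R"
  shows "pullback X h S = pullback X h' S"
  using assms by (auto simp: pullback_def fun_eq_iff)

lemma pullback_eq_self:
  assumes "embedding h A S" and "wf_struc ar A"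
  shows "pullback (univ A) h S = A"
proof -
  have "rel (pullback (univ A) h S) = rel A"
    using assms unfolding embedding_def wf_struc_def by (fastforce simp: fun_eq_iff)
  then show ?thesis by (cases A) (simp add: pullback_def)
qed

lemma embedding_pullback: "inj_on h X \<Longrightarrow> h ` X \<subseteq> univ S \<Longrightarrow> embedding h (pullback X h S) S"
  by (simp add: embedding_def)

lemma wf_struc_pullback:
  assumes "wf_struc ar S"
  shows "wf_struc ar (pullback X h S)"
  unfolding wf_struc_def
proof (intro allI ballI)
  fix R xs assume "xs \<in> rel (pullback X h S) R"
  then have "set xs \<subseteq> X" "map h xs \<in> rel S R" by auto
  then show "length xs = ar R \<and> set xs \<subseteq> univ (pullback X h S)"
    using assms unfolding wf_struc_def by (metis length_map univ_pullback)
qed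

lemma pullback_in_age:
  assumes "finite X" "inj_on h X" "h ` X \<subseteq> univ S" "wf_struc ar S"
  shows "pullback X h S \<in> age ar S"
  unfolding age_def embeds_def
  using assms embedding_pullback[OF assms(2,3)] wf_struc_pullback[OF assms(4)] by auto

lemma embedding_pullbacks_rel_iff:
  assumes "embedding phi (pullback X u S) (pullback Y w S)" and "set xs \<subseteq> X"
  shows "map u xs \<in> rel S R \<longleftrightarrow> map (w \<circ> phi) xs \<in> rel S R"
proof -
  have "set (map phi xs) \<subseteq> Y" using assms unfolding embedding_def by auto
  then show ?thesis using assms unfolding embedding_def by simp
qed

lemma embedding_via_common_target:
  assumes u: "embedding u S X" and w: "embedding w S' X"
    and "inj_on psi (univ S)" and "psi ` univ S \<subseteq> univ S'"
    and same: "\<And>xs R. set xs \<subseteq> univ S \<Longrightarrow> map u xs \<in> rel X R \<longleftrightarrow> map (w \<circ> psi) xs \<in> rel X R"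
  shows "embedding psi S S'"
  unfolding embedding_def
proof (intro conjI allI impI)
  fix R xs assume xs: "set xs \<subseteq> univ S"
  then have "set (map psi xs) \<subseteq> univ S'" using assms(4) by auto
  then show "xs \<in> rel S R \<longleftrightarrow> map psi xs \<in> rel S' R"
    using u w same[OF xs] xs unfolding embedding_def by simp
qed (use assms in auto)

lemma ex_order_embedding:
  fixes u :: "'a \<Rightarrow> 'k::linorder" and v :: "'b \<Rightarrow> 'k"
  assumes "finite C" "finite F" "inj_on u C" "inj_on v F" "card C \<le> card F"
  obtains p where "p ` C \<subseteq> F" "inj_on p C"
    "\<And>x y. x \<in> C \<Longrightarrow> y \<in> C \<Longrightarrow> u x < u y \<longleftrightarrow> v (p x) < v (p y)"
proof -
  define rank where "rank x = card {y \<in> C. u y < u x}" for x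
  define L where "L = sorted_list_of_set (v ` F)"
  define p where "p x = inv_into F v (L ! rank x)" for x
  have rank_lt: "rank x < length L" if "x \<in> C" for x
  proof -
    have "rank x < card C"
      unfolding rank_def using that assms(1) by (intro psubset_card_mono) auto
    then show ?thesis using assms(2,4,5) by (simp add: L_def card_image)
  qed
  have rank_mono: "rank x < rank y" if "x \<in> C" "y \<in> C" "u x < u y" for x y
    unfolding rank_def using that assms(1) by (intro psubset_card_mono) auto
  have vp: "p x \<in> F \<and> v (p x) = L ! rank x" if "x \<in> C" for x
  proof -
    have "L ! rank x \<in> v ` F"
      using nth_mem[OF rank_lt[OF that]] assms(2) by (simp add: L_def)
    then show ?thesis by (simp add: p_def inv_into_into f_inv_into_f)
  qed
  have mono: "v (p x) < v (p y)" if "x \<in> C" "y \<in> C" "u x < u y" for x y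
    using vp that rank_mono rank_lt sorted_wrt_nth_less[of "(<)" L]
    by (simp add: L_def)
  have iff: "u x < u y \<longleftrightarrow> v (p x) < v (p y)" if "x \<in> C" "y \<in> C" for x y
    using mono[OF that] mono[OF that(2,1)] assms(3) that
    by (metis inj_on_eq_iff less_asym neqE)
  have "inj_on p C"
    by (rule inj_onI) (metis iff less_irrefl neqE assms(3) inj_on_eq_iff)
  with vp iff show thesis by (intro that) auto
qed

lemma univ_blowup [simp]: "univ (blowup Lt prec T) = univ T \<times> UNIV"
  by (simp add: blowup_def)

lemma rel_blowup:
  "R \<noteq> Lt \<Longrightarrow> rel (blowup Lt prec T) R = {xs. set xs \<subseteq> univ T \<times> UNIV \<and> map fst xs \<in> rel T R}"
  by (simp add: blowup_def)

lemma blowup_Lt_iff: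
  "xs \<in> rel (blowup Lt prec T) Lt \<longleftrightarrow> (\<exists>p q. xs = [p, q] \<and> fst p \<in> univ T \<and> fst q \<in> univ T \<and>
     ([fst p, fst q] \<in> rel T Lt \<or> fst p = fst q \<and> prec (snd p) (snd q)))"
  by (auto simp: blowup_def)

lemma wf_struc_reduct_blowup:
  assumes "wf_struc ar T" and "Lt \<notin> L"
  shows "wf_struc ar (reduct L (blowup Lt prec T))"
proof -
  have "length xs = ar R \<and> set xs \<subseteq> univ T \<times> UNIV"
    if "R \<in> L" "xs \<in> rel (blowup Lt prec T) R" for R xs
  proof -
    have "R \<noteq> Lt" using that(1) assms(2) by auto
    then have "set xs \<subseteq> univ T \<times> UNIV" "map fst xs \<in> rel T R"
      using that(2) by (simp_all add: rel_blowup)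
    then show ?thesis using assms(1) unfolding wf_struc_def by (metis length_map)
  qed
  then show ?thesis unfolding wf_struc_def by auto
qed

lemma rel_blowup_map_cong:
  assumes into: "u ` V \<subseteq> univ T \<times> UNIV" "v ` V \<subseteq> univ T \<times> UNIV"
    and base: "\<And>xs R. set xs \<subseteq> V \<Longrightarrow> map (fst \<circ> u) xs \<in> rel T R \<longleftrightarrow> map (fst \<circ> v) xs \<in> rel T R"
    and fibre: "\<And>a b. a \<in> V \<Longrightarrow> b \<in> V \<Longrightarrow> fst (u a) = fst (u b) \<longleftrightarrow> fst (v a) = fst (v b)"
    and order: "\<And>a b. a \<in> V \<Longrightarrow> b \<in> V \<Longrightarrow> fst (u a) = fst (u b) \<Longrightarrow>
                  prec (snd (u a)) (snd (u b)) \<longleftrightarrow> prec (snd (v a)) (snd (v b))"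
    and xs: "set xs \<subseteq> V"
  shows "map u xs \<in> rel (blowup Lt prec T) R \<longleftrightarrow> map v xs \<in> rel (blowup Lt prec T) R"
proof (cases "R = Lt")
  case False
  have "set (map u xs) \<subseteq> univ T \<times> UNIV" "set (map v xs) \<subseteq> univ T \<times> UNIV"
    using into xs by (metis image_mono order_trans set_map)+
  then show ?thesis using False base[OF xs] by (simp add: rel_blowup)
next
  case True
  show ?thesis
  proof (cases "\<exists>a b. xs = [a, b]")
    case True
    then obtain a b where ab: "xs = [a, b]" by blast
    then have "a \<in> V" "b \<in> V" using xs by auto
    then show ?thesis
      using ab \<open>R = Lt\<close> into base[of "[a, b]" Lt] fibre order by (auto simp: blowup_Lt_iff)
  next
    case False
    then show ?thesis using \<open>R = Lt\<close> by (auto simp: blowup_Lt_iff)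
  qed
qed

lemma embedding_reduct_blowup_rel_iff:
  assumes "E \<noteq> Lt" and k: "embedding k S (reduct {E} (blowup Lt prec T))" and xs: "set xs \<subseteq> univ S"
  shows "xs \<in> rel S R \<longleftrightarrow> map (fst \<circ> k) xs \<in> rel (reduct {E} T) R"
proof -
  have "set (map k xs) \<subseteq> univ T \<times> UNIV" using k xs unfolding embedding_def by auto
  then show ?thesis using assms unfolding embedding_def by (auto simp: rel_blowup)
qed

lemma tournament_eq_iff:
  "tournament E S \<Longrightarrow> x \<in> univ S \<Longrightarrow> y \<in> univ S \<Longrightarrow> x = y \<longleftrightarrow> [x, y] \<notin> rel S E \<and> [y, x] \<notin> rel S E"
  unfolding tournament_def by blast

lemma embedding_reduct_blowup_fst_eq_iff:
  assumes "E \<noteq> Lt" and tour: "tournament E (reduct {E} T)"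
    and k: "embedding k S (reduct {E} (blowup Lt prec T))" and x: "x \<in> univ S" and y: "y \<in> univ S"
  shows "fst (k x) = fst (k y) \<longleftrightarrow> [x, y] \<notin> rel S E \<and> [y, x] \<notin> rel S E"
proof -
  have "fst (k x) \<in> univ T" "fst (k y) \<in> univ T"
    using k x y unfolding embedding_def by auto
  then have "fst (k x) = fst (k y) \<longleftrightarrow>
      [fst (k x), fst (k y)] \<notin> rel T E \<and> [fst (k y), fst (k x)] \<notin> rel T E"
    using tournament_eq_iff[OF tour] by simp
  moreover have "[x, y] \<in> rel S E \<longleftrightarrow> [fst (k x), fst (k y)] \<in> rel T E"
    using embedding_reduct_blowup_rel_iff[OF assms(1) k, of "[x, y]" E] x y by simp
  moreover have "[y, x] \<in> rel S E \<longleftrightarrow> [fst (k y), fst (k x)] \<in> rel T E"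
    using embedding_reduct_blowup_rel_iff[OF assms(1) k, of "[y, x]" E] x y by simp
  ultimately show ?thesis by simp
qed

lemma embeddings_reduct_blowup_same_fibres:
  assumes "E \<noteq> Lt" and "tournament E (reduct {E} T)"
    and "embedding k S (reduct {E} (blowup Lt prec T))" "embedding k' S (reduct {E} (blowup Lt prec T))"
    and "x \<in> univ S" "y \<in> univ S"
  shows "fst (k x) = fst (k y) \<longleftrightarrow> fst (k' x) = fst (k' y)"
  using embedding_reduct_blowup_fst_eq_iff[OF assms(1,2,3,5,6)]
    embedding_reduct_blowup_fst_eq_iff[OF assms(1,2,4,5,6)] by simp

definition fibre_rep :: "('b::wellorder \<Rightarrow> 'a \<times> 'c) \<Rightarrow> 'b set \<Rightarrow> 'b \<Rightarrow> 'b" where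
  "fibre_rep k V a = (LEAST b. b \<in> V \<and> fst (k b) = fst (k a))"

lemma fibre_rep:
  assumes "a \<in> V"
  shows "fibre_rep k V a \<in> V" and "fst (k (fibre_rep k V a)) = fst (k a)"
  using LeastI[of "\<lambda>b. b \<in> V \<and> fst (k b) = fst (k a)" a] assms
  by (simp_all add: fibre_rep_def)

lemma fibre_rep_eq_iff:
  assumes "a \<in> V" "b \<in> V"
  shows "fibre_rep k V a = fibre_rep k V b \<longleftrightarrow> fst (k a) = fst (k b)"
proof
  assume "fibre_rep k V a = fibre_rep k V b"
  then show "fst (k a) = fst (k b)"
    using fibre_rep(2)[OF assms(1), where k = k] fibre_rep(2)[OF assms(2), where k = k] by simp
qed (simp add: fibre_rep_def)

abbreviation fibre_reps :: "('b::wellorder \<Rightarrow> 'a \<times> 'c) \<Rightarrow> 'b set \<Rightarrow> 'b set" where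
  "fibre_reps k V \<equiv> fibre_rep k V ` V"

lemma inj_on_fst_fibre_reps: "inj_on (fst \<circ> k) (fibre_reps k V)"
  by (rule inj_onI) (auto simp: fibre_rep fibre_rep_eq_iff)

locale blowup_setting =
  fixes ar :: "'r \<Rightarrow> nat" and E Lt :: 'r and T :: "('a, 'r) struc"
    and prec :: "nat \<Rightarrow> nat \<Rightarrow> bool" and hq :: "nat \<Rightarrow> 'q::linorder"
  assumes E_neq_Lt: "E \<noteq> Lt"
    and wf_T: "wf_struc ar T"
    and tournament_T: "tournament E (reduct {E} T)"
    and inj_hq: "inj hq"
    and prec_iff: "prec i j \<longleftrightarrow> hq i < hq j"
begin

abbreviation TI :: "('a \<times> nat, 'r) struc" where
  "TI \<equiv> blowup Lt prec T"

lemmas same_fibres = embeddings_reduct_blowup_same_fibres[OF E_neq_Lt tournament_T]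
lemmas reduct_rel_iff = embedding_reduct_blowup_rel_iff[OF E_neq_Lt]

lemma embedding_into_TI: "embedding k S (reduct {E} TI) \<Longrightarrow> x \<in> univ S \<Longrightarrow> k x \<in> univ T \<times> UNIV"
  unfolding embedding_def by auto

text \<open>The structure \<open>B0[I_n]\<close>, the point \<open>(b, i)\<close> being coded as \<open>prod_encode (b, i)\<close>.\<close>
definition copies :: "nat \<Rightarrow> (nat \<Rightarrow> 'a) \<Rightarrow> (nat, 'r) struc \<Rightarrow> (nat, 'r) struc" where
  "copies n g B0 = pullback (prod_encode ` (univ B0 \<times> {..<n})) (map_prod g id \<circ> prod_decode) (reduct {E} TI)"

lemma embedding_copies:
  assumes "embedding g B0 (reduct {E} T)"
  shows "embedding (map_prod g id \<circ> prod_decode) (copies n g B0) (reduct {E} TI)"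
  unfolding copies_def
proof (rule embedding_pullback)
  have "inj_on (map_prod g id) (univ B0 \<times> {..<n})"
    using assms unfolding embedding_def by (auto intro: map_prod_inj_on)
  then show "inj_on (map_prod g id \<circ> prod_decode) (prod_encode ` (univ B0 \<times> {..<n}))"
    by (auto intro!: comp_inj_on inj_on_subset[OF inj_prod_decode] simp: image_image)
  show "(map_prod g id \<circ> prod_decode) ` prod_encode ` (univ B0 \<times> {..<n}) \<subseteq> univ (reduct {E} TI)"
    using assms unfolding embedding_def by auto
qed

lemma copies_in_age:
  assumes "embedding g B0 (reduct {E} T)" and "finite (univ B0)"
  shows "copies n g B0 \<in> age ar (reduct {E} TI)"
proof -
  have "wf_struc ar (copies n g B0)"
    unfolding copies_def using E_neq_Lt wf_T by (intro wf_struc_pullback wf_struc_reduct_blowup) auto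
  then show ?thesis using assms embedding_copies unfolding age_def embeds_def copies_def by auto
qed

lemma copies_fst_eq_iff:
  assumes g: "embedding g B0 (reduct {E} T)" and h: "embedding h (copies n g B0) (reduct {E} TI)"
    and "b \<in> univ B0" "b' \<in> univ B0" "i < n" "j < n"
  shows "fst (h (prod_encode (b, i))) = fst (h (prod_encode (b', j))) \<longleftrightarrow> b = b'"
proof -
  have "prod_encode (b, i) \<in> univ (copies n g B0)" "prod_encode (b', j) \<in> univ (copies n g B0)"
    using assms(3-6) by (simp_all add: copies_def)
  from same_fibres[OF h embedding_copies[OF g] this]
  have "fst (h (prod_encode (b, i))) = fst (h (prod_encode (b', j))) \<longleftrightarrow> g b = g b'"
    by simp
  also have "\<dots> \<longleftrightarrow> b = b'" using g assms(3,4) unfolding embedding_def by (meson inj_on_eq_iff)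
  finally show ?thesis .
qed

lemma copies_expansion:
  assumes g: "embedding g B0 (reduct {E} T)" and B0: "wf_struc ar B0" "finite (univ B0)" and "0 < n"
    and h: "embedding h Bs TI" and Bs: "reduct {E} Bs = copies n g B0"
  defines "Phi \<equiv> \<lambda>b. fst (h (prod_encode (b, 0)))"
  shows "pullback (univ B0) Phi T \<in> age ar T" and "reduct {E} (pullback (univ B0) Phi T) = B0"
proof -
  have h': "embedding h (copies n g B0) (reduct {E} TI)"
    using embedding_reduct[OF h, of "{E}"] unfolding Bs .
  have enc: "prod_encode (b, 0) \<in> univ (copies n g B0)" if "b \<in> univ B0" for b
    using that \<open>0 < n\<close> by (simp add: copies_def)
  have "inj_on Phi (univ B0)"
  proof (rule inj_onI)
    fix b b' assume "b \<in> univ B0" "b' \<in> univ B0" "Phi b = Phi b'"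
    then show "b = b'" using copies_fst_eq_iff[OF g h' _ _ \<open>0 < n\<close> \<open>0 < n\<close>] by (simp add: Phi_def)
  qed
  moreover have "Phi ` univ B0 \<subseteq> univ T"
    using embedding_into_TI[OF h' enc] unfolding Phi_def by (simp add: image_subset_iff mem_Times_iff)
  ultimately show "pullback (univ B0) Phi T \<in> age ar T" using B0(2) wf_T by (intro pullback_in_age)
  have "map Phi xs \<in> rel (reduct {E} T) R \<longleftrightarrow> map g xs \<in> rel (reduct {E} T) R"
    if xs: "set xs \<subseteq> univ B0" for xs R
  proof -
    have "set (map (\<lambda>b. prod_encode (b, 0)) xs) \<subseteq> univ (copies n g B0)" using xs enc by auto
    from reduct_rel_iff[OF h' this, of R] reduct_rel_iff[OF embedding_copies[OF g] this, of R]
    show ?thesis by (simp add: Phi_def comp_def)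
  qed
  then have "pullback (univ B0) Phi (reduct {E} T) = pullback (univ B0) g (reduct {E} T)"
    by (rule pullback_cong)
  also have "\<dots> = B0" using g B0(1) by (rule pullback_eq_self)
  finally show "reduct {E} (pullback (univ B0) Phi T) = B0" by (simp add: reduct_pullback)
qed

text \<open>Up to isomorphism, the substructure of \<open>A\<close> on one point of each copy \<open>{x} \<times> \<nat>\<close> that \<open>f\<close> meets.\<close>
definition transversal :: "(nat \<Rightarrow> 'a \<times> nat) \<Rightarrow> (nat, 'r) struc \<Rightarrow> (nat, 'r) struc" where
  "transversal f A = pullback (fibre_reps f (univ A)) (fst \<circ> f) (reduct {E} T)"

lemma transversal_in_age:
  assumes f: "embedding f A (reduct {E} TI)" and "finite (univ A)"
  shows "transversal f A \<in> age ar (reduct {E} T)"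
  unfolding transversal_def
proof (rule pullback_in_age)
  have "fst (f (fibre_rep f (univ A) a)) \<in> univ T" if "a \<in> univ A" for a
    using embedding_into_TI[OF f fibre_rep(1)[OF that]] by (simp add: mem_Times_iff)
  then show "(fst \<circ> f) ` fibre_reps f (univ A) \<subseteq> univ (reduct {E} T)" by auto
qed (use assms(2) in \<open>simp_all add: inj_on_fst_fibre_reps wf_struc_reduct[OF wf_T]\<close>)

lemma transversal_expansion:
  assumes f: "embedding f A (reduct {E} TI)" and "finite (univ A)"
    and h: "embedding h As TI" and As: "reduct {E} As = A"
  shows "pullback (fibre_reps f (univ A)) (fst \<circ> h) T \<in> age ar T"
    and "reduct {E} (pullback (fibre_reps f (univ A)) (fst \<circ> h) T) = transversal f A"
proof -
  let ?X = "fibre_reps f (univ A)"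
  have h': "embedding h A (reduct {E} TI)" using embedding_reduct[OF h, of "{E}"] unfolding As .
  have X: "?X \<subseteq> univ A" using fibre_rep(1) by auto
  have "inj_on (fst \<circ> h) ?X"
    using inj_on_fst_fibre_reps[of f "univ A"] same_fibres[OF h' f] X
    unfolding inj_on_def by (metis (no_types, lifting) comp_apply subsetD)
  moreover have "(fst \<circ> h) ` ?X \<subseteq> univ T" using X embedding_into_TI[OF h'] by fastforce
  ultimately show "pullback ?X (fst \<circ> h) T \<in> age ar T"
    using \<open>finite (univ A)\<close> X wf_T by (intro pullback_in_age) (auto intro: finite_subset)
  have "pullback ?X (fst \<circ> h) (reduct {E} T) = pullback ?X (fst \<circ> f) (reduct {E} T)"
    using reduct_rel_iff[OF h'] reduct_rel_iff[OF f] X by (intro pullback_cong) (meson order_trans)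
  then show "reduct {E} (pullback ?X (fst \<circ> h) T) = transversal f A"
    by (simp add: reduct_pullback transversal_def)
qed

lemma fibre_order_embedding:
  assumes h: "embedding h A (reduct {E} TI)" and C: "C \<subseteq> univ A" "finite C" "card C \<le> n"
    and fibre: "\<And>a b. a \<in> C \<Longrightarrow> b \<in> C \<Longrightarrow> fst (h a) = fst (h b)"
    and g: "embedding g B0 (reduct {E} T)" and k: "embedding k (copies n g B0) (reduct {E} TI)"
    and c: "c \<in> univ B0"
  obtains j where "j ` C \<subseteq> {..<n}" "inj_on j C"
    "\<And>a b. a \<in> C \<Longrightarrow> b \<in> C \<Longrightarrow> prec (snd (h a)) (snd (h b)) \<longleftrightarrow>
       prec (snd (k (prod_encode (c, j a)))) (snd (k (prod_encode (c, j b))))"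
proof -
  have "inj_on (hq \<circ> snd \<circ> h) C"
  proof (rule inj_onI)
    fix a b assume ab: "a \<in> C" "b \<in> C" "(hq \<circ> snd \<circ> h) a = (hq \<circ> snd \<circ> h) b"
    then have "h a = h b" using fibre[OF ab(1,2)] inj_hq by (simp add: prod_eq_iff inj_eq)
    moreover have "inj_on h (univ A)" using h by (simp add: embedding_def)
    ultimately show "a = b" using ab C(1) by (meson inj_on_eq_iff subsetD)
  qed
  moreover have "inj_on (\<lambda>i. hq (snd (k (prod_encode (c, i))))) {..<n}"
  proof (rule inj_onI)
    fix i i' assume ii: "i \<in> {..<n}" "i' \<in> {..<n}"
      "hq (snd (k (prod_encode (c, i)))) = hq (snd (k (prod_encode (c, i'))))"
    then have "k (prod_encode (c, i)) = k (prod_encode (c, i'))"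
      using copies_fst_eq_iff[OF g k c c, of i i'] inj_hq by (simp add: prod_eq_iff inj_eq)
    moreover have "inj_on k (univ (copies n g B0))" using k by (simp add: embedding_def)
    moreover have "prod_encode (c, i) \<in> univ (copies n g B0)" "prod_encode (c, i') \<in> univ (copies n g B0)"
      using ii c by (simp_all add: copies_def)
    ultimately show "i = i'" by (simp add: inj_on_eq_iff prod_encode_eq)
  qed
  ultimately obtain j where "j ` C \<subseteq> {..<n}" "inj_on j C"
    "\<And>a b. a \<in> C \<Longrightarrow> b \<in> C \<Longrightarrow> (hq \<circ> snd \<circ> h) a < (hq \<circ> snd \<circ> h) b \<longleftrightarrow>
       hq (snd (k (prod_encode (c, j a)))) < hq (snd (k (prod_encode (c, j b))))"
    using ex_order_embedding[OF C(2) finite_lessThan, where u = "hq \<circ> snd \<circ> h"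
        and v = "\<lambda>i. hq (snd (k (prod_encode (c, i))))"] C(3) by auto
  then show thesis by (intro that) (auto simp: prec_iff)
qed

lemma fibrewise_lift:
  assumes f: "embedding f A (reduct {E} TI)" and "finite (univ A)" and "card (univ A) \<le> n"
    and h: "embedding h A (reduct {E} TI)"
    and g: "embedding g B0 (reduct {E} T)" and k: "embedding k (copies n g B0) (reduct {E} TI)"
    and phi: "inj_on phi (fibre_reps f (univ A))" "phi ` fibre_reps f (univ A) \<subseteq> univ B0"
  obtains psi where "inj_on psi (univ A)"
    "\<And>a. a \<in> univ A \<Longrightarrow> psi a \<in> univ (copies n g B0)"
    "\<And>a. a \<in> univ A \<Longrightarrow> fst (k (psi a)) = fst (k (prod_encode (phi (fibre_rep f (univ A) a), 0)))"
    "\<And>a b. a \<in> univ A \<Longrightarrow> b \<in> univ A \<Longrightarrow> fst (h a) = fst (h b) \<Longrightarrow>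
       prec (snd (h a)) (snd (h b)) \<longleftrightarrow> prec (snd (k (psi a))) (snd (k (psi b)))"
proof -
  let ?rep = "fibre_rep f (univ A)"
  let ?C = "\<lambda>x. {a \<in> univ A. ?rep a = x}"
  define good where "good x j \<longleftrightarrow> j ` ?C x \<subseteq> {..<n} \<and> inj_on j (?C x) \<and>
    (\<forall>a \<in> ?C x. \<forall>b \<in> ?C x. prec (snd (h a)) (snd (h b)) \<longleftrightarrow>
       prec (snd (k (prod_encode (phi x, j a)))) (snd (k (prod_encode (phi x, j b)))))" for x j
  have rep_eq_iff: "?rep a = ?rep b \<longleftrightarrow> fst (h a) = fst (h b)" if "a \<in> univ A" "b \<in> univ A" for a b
    using fibre_rep_eq_iff[OF that, where k = f] same_fibres[OF f h that] by simp
  have "\<exists>j. good x j" if x: "x \<in> fibre_reps f (univ A)" for x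
  proof -
    have C: "?C x \<subseteq> univ A" "finite (?C x)" "card (?C x) \<le> n"
      using assms(2,3) card_mono[OF assms(2), of "?C x"] by (auto intro: finite_subset)
    have fibre: "\<And>a b. a \<in> ?C x \<Longrightarrow> b \<in> ?C x \<Longrightarrow> fst (h a) = fst (h b)"
      using rep_eq_iff by auto
    have "phi x \<in> univ B0" using phi(2) x by blast
    then obtain j where "j ` ?C x \<subseteq> {..<n}" "inj_on j (?C x)"
      "\<And>a b. a \<in> ?C x \<Longrightarrow> b \<in> ?C x \<Longrightarrow> prec (snd (h a)) (snd (h b)) \<longleftrightarrow>
         prec (snd (k (prod_encode (phi x, j a)))) (snd (k (prod_encode (phi x, j b))))"
      using fibre_order_embedding[OF h C fibre g k] by blast
    then show ?thesis unfolding good_def by blast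
  qed
  then obtain J where J: "\<And>x. x \<in> fibre_reps f (univ A) \<Longrightarrow> good x (J x)" by metis
  define psi where "psi a = prod_encode (phi (?rep a), J (?rep a) a)" for a
  have J_lt: "J (?rep a) a < n" if "a \<in> univ A" for a
    using J[of "?rep a"] that unfolding good_def by auto
  have phi_rep: "phi (?rep a) \<in> univ B0" if "a \<in> univ A" for a
    using phi(2) that by blast
  show thesis
  proof
    show "inj_on psi (univ A)"
    proof (rule inj_onI)
      fix a b assume ab: "a \<in> univ A" "b \<in> univ A" "psi a = psi b"
      then have "phi (?rep a) = phi (?rep b)" and j: "J (?rep a) a = J (?rep b) b"
        by (simp_all add: psi_def prod_encode_eq)
      then have r: "?rep a = ?rep b" using phi(1) ab(1,2) by (simp add: inj_on_eq_iff)
      have "inj_on (J (?rep a)) (?C (?rep a))" using J[of "?rep a"] ab(1) by (simp add: good_def)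
      then show "a = b" using ab(1,2) r j by (auto dest: inj_onD)
    qed
    show "psi a \<in> univ (copies n g B0)" if "a \<in> univ A" for a
      unfolding psi_def copies_def univ_pullback using J_lt[OF that] phi_rep[OF that] by blast
    show "fst (k (psi a)) = fst (k (prod_encode (phi (?rep a), 0)))" if "a \<in> univ A" for a
    proof -
      have "0 < n" using J_lt[OF that] by simp
      with copies_fst_eq_iff[OF g k phi_rep[OF that] phi_rep[OF that] J_lt[OF that], of 0]
      show ?thesis unfolding psi_def by blast
    qed
    show "prec (snd (h a)) (snd (h b)) \<longleftrightarrow> prec (snd (k (psi a))) (snd (k (psi b)))"
      if "a \<in> univ A" "b \<in> univ A" "fst (h a) = fst (h b)" for a b
      using J[of "?rep a"] that rep_eq_iff[OF that(1,2)] by (simp add: psi_def good_def)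
  qed
qed

lemma transversal_lift:
  assumes f: "embedding f A (reduct {E} TI)" and fin: "finite (univ A)" and n: "card (univ A) < n"
    and h: "embedding h A (reduct {E} TI)"
    and g: "embedding g B0 (reduct {E} T)" and k: "embedding k (copies n g B0) (reduct {E} TI)"
    and phi: "embedding phi (pullback (fibre_reps f (univ A)) (fst \<circ> h) T)
                (pullback (univ B0) (\<lambda>b. fst (k (prod_encode (b, 0)))) T)"
  obtains psi where "inj_on psi (univ A)" "psi ` univ A \<subseteq> univ (copies n g B0)"
    "\<And>xs R. set xs \<subseteq> univ A \<Longrightarrow> map h xs \<in> rel TI R \<longleftrightarrow> map (k \<circ> psi) xs \<in> rel TI R"
proof -
  let ?rep = "fibre_rep f (univ A)"
  let ?Phi = "\<lambda>b. fst (k (prod_encode (b, 0)))"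
  have phi_into: "phi ` fibre_reps f (univ A) \<subseteq> univ B0" and phi_inj: "inj_on phi (fibre_reps f (univ A))"
    using phi unfolding embedding_def by auto
  obtain psi where psi: "inj_on psi (univ A)" and psi_univ: "\<And>a. a \<in> univ A \<Longrightarrow> psi a \<in> univ (copies n g B0)"
    and fst_psi: "\<And>a. a \<in> univ A \<Longrightarrow> fst (k (psi a)) = ?Phi (phi (?rep a))"
    and psi_order: "\<And>a b. a \<in> univ A \<Longrightarrow> b \<in> univ A \<Longrightarrow> fst (h a) = fst (h b) \<Longrightarrow>
       prec (snd (h a)) (snd (h b)) \<longleftrightarrow> prec (snd (k (psi a))) (snd (k (psi b)))"
    using fibrewise_lift[OF f fin _ h g k phi_inj phi_into] n by auto
  have fst_h: "fst (h (?rep a)) = fst (h a)" if "a \<in> univ A" for a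
    using fibre_rep[OF that, of f] same_fibres[OF f h] that by blast
  have fibre_iff: "fst (k (psi a)) = fst (k (psi b)) \<longleftrightarrow> fst (h a) = fst (h b)"
    if "a \<in> univ A" "b \<in> univ A" for a b
  proof -
    have "phi (?rep a) \<in> univ B0" "phi (?rep b) \<in> univ B0" "0 < n" using phi_into that n by auto
    then have "fst (k (psi a)) = fst (k (psi b)) \<longleftrightarrow> phi (?rep a) = phi (?rep b)"
      using fst_psi that copies_fst_eq_iff[OF g k] by simp
    also have "\<dots> \<longleftrightarrow> ?rep a = ?rep b" using phi_inj that by (simp add: inj_on_eq_iff)
    also have "\<dots> \<longleftrightarrow> fst (h a) = fst (h b)"
      using fibre_rep_eq_iff[OF that, where k = f] same_fibres[OF f h that] by simp
    finally show ?thesis .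
  qed
  have base: "map (fst \<circ> h) xs \<in> rel T R \<longleftrightarrow> map (fst \<circ> (k \<circ> psi)) xs \<in> rel T R"
    if xs: "set xs \<subseteq> univ A" for xs R
  proof -
    have "set (map ?rep xs) \<subseteq> fibre_reps f (univ A)" using xs by auto
    from embedding_pullbacks_rel_iff[OF phi this]
    have "map (fst \<circ> h) (map ?rep xs) \<in> rel T R \<longleftrightarrow> map (?Phi \<circ> phi) (map ?rep xs) \<in> rel T R" .
    moreover have "map (fst \<circ> h) (map ?rep xs) = map (fst \<circ> h) xs"
      unfolding map_map using xs fst_h by (intro map_cong) auto
    moreover have "map (?Phi \<circ> phi) (map ?rep xs) = map (fst \<circ> (k \<circ> psi)) xs"
      unfolding map_map using xs fst_psi by (intro map_cong) auto
    ultimately show ?thesis by (simp only:)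
  qed
  show thesis
  proof (rule that[OF psi])
    show "psi ` univ A \<subseteq> univ (copies n g B0)" using psi_univ by blast
    show "map h xs \<in> rel TI R \<longleftrightarrow> map (k \<circ> psi) xs \<in> rel TI R" if "set xs \<subseteq> univ A" for xs R
    proof (rule rel_blowup_map_cong[OF _ _ base _ _ that])
      show "h ` univ A \<subseteq> univ T \<times> UNIV" "(k \<circ> psi) ` univ A \<subseteq> univ T \<times> UNIV"
        unfolding image_subset_iff comp_def
        using embedding_into_TI[OF h] embedding_into_TI[OF k psi_univ] by blast+
    qed (use fibre_iff psi_order in simp_all)
  qed
qed

lemma expansion_embeds_into_expansion_of_copies:
  assumes f: "embedding f A (reduct {E} TI)" and fin: "finite (univ A)"
    and g: "embedding g B0 (reduct {E} T)" and B0: "wf_struc ar B0" "finite (univ B0)"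
    and n: "card (univ A) < n"
    and EP: "\<And>As0 Bs0. As0 \<in> age ar T \<Longrightarrow> Bs0 \<in> age ar T \<Longrightarrow>
       reduct {E} As0 = transversal f A \<Longrightarrow> reduct {E} Bs0 = B0 \<Longrightarrow> embeds As0 Bs0"
    and hA: "embedding hA As TI" "reduct {E} As = A"
    and hB: "embedding hB Bs TI" "reduct {E} Bs = copies n g B0"
  shows "embeds As Bs"
proof -
  have hA': "embedding hA A (reduct {E} TI)" using embedding_reduct[OF hA(1), of "{E}"] unfolding hA(2) .
  have hB': "embedding hB (copies n g B0) (reduct {E} TI)"
    using embedding_reduct[OF hB(1), of "{E}"] unfolding hB(2) .
  have "0 < n" using n by simp
  note As0 = transversal_expansion[OF f fin hA] and Bs0 = copies_expansion[OF g B0 \<open>0 < n\<close> hB]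
  obtain phi where "embedding phi (pullback (fibre_reps f (univ A)) (fst \<circ> hA) T)
      (pullback (univ B0) (\<lambda>b. fst (hB (prod_encode (b, 0)))) T)"
    using EP[OF As0(1) Bs0(1) As0(2) Bs0(2)] unfolding embeds_def by blast
  then obtain psi where "inj_on psi (univ A)" "psi ` univ A \<subseteq> univ (copies n g B0)"
    "\<And>xs R. set xs \<subseteq> univ A \<Longrightarrow> map hA xs \<in> rel TI R \<longleftrightarrow> map (hB \<circ> psi) xs \<in> rel TI R"
    using transversal_lift[OF f fin n hA' g hB'] by blast
  moreover have "univ As = univ A" "univ Bs = univ (copies n g B0)"
    using arg_cong[OF hA(2), of univ] arg_cong[OF hB(2), of univ] by simp_all
  ultimately show ?thesis
    unfolding embeds_def by (metis embedding_via_common_target[OF hA(1) hB(1)])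
qed

theorem expansion_property_blowup:
  assumes EP: "expansion_property {E} (age ar (reduct {E} T)) (age ar T)"
  shows "expansion_property {E} (age ar (reduct {E} TI)) (age ar TI)"
  unfolding expansion_property_def
proof
  fix A assume "A \<in> age ar (reduct {E} TI)"
  then obtain f where f: "embedding f A (reduct {E} TI)" and fin: "finite (univ A)"
    unfolding age_def embeds_def by blast
  obtain B0 where "B0 \<in> age ar (reduct {E} T)"
    and B0_EP: "\<And>As0 Bs0. As0 \<in> age ar T \<Longrightarrow> Bs0 \<in> age ar T \<Longrightarrow>
       reduct {E} As0 = transversal f A \<Longrightarrow> reduct {E} Bs0 = B0 \<Longrightarrow> embeds As0 Bs0"
    using EP transversal_in_age[OF f fin] unfolding expansion_property_def by blast
  then obtain g where g: "embedding g B0 (reduct {E} T)" and B0: "wf_struc ar B0" "finite (univ B0)"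
    unfolding age_def embeds_def by blast
  let ?B = "copies (Suc (card (univ A))) g B0"
  show "\<exists>B \<in> age ar (reduct {E} TI). \<forall>As Bs. As \<in> age ar TI \<longrightarrow> Bs \<in> age ar TI \<longrightarrow>
          reduct {E} As = A \<longrightarrow> reduct {E} Bs = B \<longrightarrow> embeds As Bs"
  proof (intro bexI allI impI)
    show "?B \<in> age ar (reduct {E} TI)" using g B0(2) by (rule copies_in_age)
    fix As Bs assume "As \<in> age ar TI" "Bs \<in> age ar TI" and reducts: "reduct {E} As = A" "reduct {E} Bs = ?B"
    then obtain hA hB where "embedding hA As TI" "embedding hB Bs TI"
      unfolding age_def embeds_def by blast
    with reducts show "embeds As Bs"
      using expansion_embeds_into_expansion_of_copies[OF f fin g B0 _ B0_EP] by blast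
  qed
qed

end

theorem mainTheorem4:
  fixes ar :: "'r::countable \<Rightarrow> nat"
    and E Lt :: 'r
    and Tstar :: "('a, 'r) struc"
    and prec :: "nat \<Rightarrow> nat \<Rightarrow> bool"
  assumes "E \<noteq> Lt" and "ar E = 2" and "ar Lt = 2"
    and "wf_struc ar Tstar"
    and "countable (univ Tstar)" and "infinite (univ Tstar)"
    and "tournament E (reduct {E} Tstar)"
    and "homogeneous (reduct {E} Tstar)"
    and "strict_linear_order_on (univ Tstar) (\<lambda>x y. [x, y] \<in> rel Tstar Lt)"
    and "\<exists>h :: nat \<Rightarrow> rat. bij h \<and> (\<forall>i j. prec i j \<longleftrightarrow> h i < h j)"
    and "expansion_property {E} (age ar (reduct {E} Tstar)) (age ar Tstar)"
  shows "expansion_property {E} (age ar (reduct {E} (blowup Lt prec Tstar)))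
           (age ar (blowup Lt prec Tstar))"
proof -
  obtain h :: "nat \<Rightarrow> rat" where "bij h" and "\<And>i j. prec i j \<longleftrightarrow> h i < h j"
    using assms(10) by blast
  then interpret blowup_setting ar E Lt Tstar prec h
    using assms(1,4,7) by unfold_locales (simp_all add: bij_is_inj)
  show ?thesis using assms(11) by (rule expansion_property_blowup)
qed

end
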